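(* Let $\mathscr{A}$ be a finite $\sigma$-structure and $k>0$. There is a bijective correspondence between $\mathbb{E}_k$-coalgebras $\alpha:\mathscr{A}\to\mathbb{E}_k\mathscr{A}$ and forest covers of the Gaifman graph $\mathcal{G}(\mathscr{A})$ of height $\le k$ (with universe $A$); under it, $\alpha$ corresponds to the order $a\le a'$ iff $\alpha(a)\sqsubseteq\alpha(a')$, and a forest cover corresponds to the map sending $a$ to the chain $[a_1,\dots,a_j]$ of its predecessors $a_1<\dots<a_j=a$.
   Context: $\mathbb{E}_k\mathscr{A}$: universe $A^{\le k}$ (non-empty sequences over $A$ of length $\le k$, ordered by prefix $\sqsubseteq$); $R(s_1,\dots,s_n)$ iff the $s_i$ are pairwise $\sqsubseteq$-comparable and $R^{\mathscr{A}}(\varepsilon s_1,\dots,\varepsilon s_n)$, where $\varepsilon[a_1,\dots,a_j]=a_j$. Comultiplication $\delta_{\mathscr{A}}[a_1,\dots,a_j]=[[a_1],[a_1,a_2],\dots,[a_1,\dots,a_j]]$; functor action on a homomorphism $h$: $\mathbb{E}_k h[a_1,\dots,a_j]=[h(a_1),\dots,h(a_j)]$. An $\mathbb{E}_k$-coalgebra on $\mathscr{A}$ is a homomorphism $\alpha:\mathscr{A}\to\mathbb{E}_k\mathscr{A}$ with $\delta_{\mathscr{A}}\circ\alpha=\mathbb{E}_k\alpha\circ\alpha$ and $\varepsilon_{\mathscr{A}}\circ\alpha=\mathrm{id}_A$. The Gaifman graph $\mathcal{G}(\mathscr{A})=(A,\frown)$: $a\frown a'$ iff $a\neq a'$ and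 both occur in some tuple of some relation $R^{\mathscr{A}}$. A forest is a poset in which the set of predecessors of each element is a finite chain; its height is the maximum size of a chain. A forest cover of a graph $(V,\frown)$ is a forest order $\le$ on $V$ such that $v\frown v'$ implies $v\le v'$ or $v'\le v$. *)

theory Defs
  imports "HOL-Library.Sublist" "HOL-Library.FuncSet"
begin

text \<open>A relational sigma-structure: signature given by an arity function
  ar on relation symbols of type 'r; a structure is a universe A and an
  interpretation I assigning to each relation symbol a set of tuples (lists).\<close>

definition sig_struct :: "('r \<Rightarrow> nat) \<Rightarrow> 'a set \<Rightarrow> ('r \<Rightarrow> 'a list set) \<Rightarrow> bool" where
  "sig_struct ar A I \<longleftrightarrow> (\<forall>R. \<forall>t\<in>I R. length t = ar R \<and> set t \<subseteq> A)"

definition is_hom :: "'a set \<Rightarrow> ('r \<Rightarrow> 'a list set) \<Rightarrow> 'b set \<Rightarrow> ('r \<Rightarrow> 'b list set) \<Rightarrow> ('a \<Rightarrow> 'b) \<Rightarrow> bool" where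
  "is_hom A I B J h \<longleftrightarrow> (\<forall>a\<in>A. h a \<in> B) \<and> (\<forall>R. \<forall>t\<in>I R. map h t \<in> J R)"

definition Ek_univ :: "nat \<Rightarrow> 'a set \<Rightarrow> 'a list set" where
  "Ek_univ k A = {s. s \<noteq> [] \<and> length s \<le> k \<and> set s \<subseteq> A}"

definition Ek_rel :: "nat \<Rightarrow> 'a set \<Rightarrow> ('r \<Rightarrow> 'a list set) \<Rightarrow> 'r \<Rightarrow> 'a list list set" where
  "Ek_rel k A I R = {ts. set ts \<subseteq> Ek_univ k A
      \<and> (\<forall>s\<in>set ts. \<forall>s'\<in>set ts. prefix s s' \<or> prefix s' s)
      \<and> map last ts \<in> I R}"

text \<open>Counit epsilon is last; comultiplication delta.\<close>
definition Ek_delta :: "'a list \<Rightarrow> 'a list list" where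
  "Ek_delta s = map (\<lambda>i. take i s) [1..<Suc (length s)]"

definition Ek_coalgebra :: "nat \<Rightarrow> 'a set \<Rightarrow> ('r \<Rightarrow> 'a list set) \<Rightarrow> ('a \<Rightarrow> 'a list) \<Rightarrow> bool" where
  "Ek_coalgebra k A I \<alpha> \<longleftrightarrow>
     is_hom A I (Ek_univ k A) (Ek_rel k A I) \<alpha>
     \<and> (\<forall>a\<in>A. Ek_delta (\<alpha> a) = map \<alpha> (\<alpha> a))
     \<and> (\<forall>a\<in>A. last (\<alpha> a) = a)"

definition gaifman_adj :: "('r \<Rightarrow> 'a list set) \<Rightarrow> 'a \<Rightarrow> 'a \<Rightarrow> bool" where
  "gaifman_adj I a a' \<longleftrightarrow> a \<noteq> a' \<and> (\<exists>R. \<exists>t\<in>I R. a \<in> set t \<and> a' \<in> set t)"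

definition is_chain :: "'a rel \<Rightarrow> 'a set \<Rightarrow> bool" where
  "is_chain le C \<longleftrightarrow> (\<forall>x\<in>C. \<forall>y\<in>C. (x, y) \<in> le \<or> (y, x) \<in> le)"

definition forest_order :: "'a set \<Rightarrow> 'a rel \<Rightarrow> bool" where
  "forest_order V le \<longleftrightarrow> le \<subseteq> V \<times> V \<and> refl_on V le \<and> antisym le \<and> trans le
     \<and> (\<forall>a\<in>V. finite {b. (b, a) \<in> le} \<and> is_chain le {b. (b, a) \<in> le})"

definition height_le :: "'a set \<Rightarrow> 'a rel \<Rightarrow> nat \<Rightarrow> bool" where
  "height_le V le k \<longleftrightarrow> (\<forall>C\<subseteq>V. is_chain le C \<longrightarrow> finite C \<and> card C \<le> k)"

definition forest_cover :: "'a set \<Rightarrow> ('a \<Rightarrow> 'a \<Rightarrow> bool) \<Rightarrow> 'a rel \<Rightarrow> bool" where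
  "forest_cover V adj le \<longleftrightarrow> forest_order V le
     \<and> (\<forall>v\<in>V. \<forall>v'\<in>V. adj v v' \<longrightarrow> (v, v') \<in> le \<or> (v', v) \<in> le)"

definition coalg_to_order :: "'a set \<Rightarrow> ('a \<Rightarrow> 'a list) \<Rightarrow> 'a rel" where
  "coalg_to_order A \<alpha> = {(a, a'). a \<in> A \<and> a' \<in> A \<and> prefix (\<alpha> a) (\<alpha> a')}"

definition pred_chain :: "'a rel \<Rightarrow> 'a \<Rightarrow> 'a list" where
  "pred_chain le a = (THE xs. set xs = {b. (b, a) \<in> le}
       \<and> sorted_wrt (\<lambda>x y. (x, y) \<in> le \<and> x \<noteq> y) xs)"

definition order_to_coalg :: "'a set \<Rightarrow> 'a rel \<Rightarrow> ('a \<Rightarrow> 'a list)" where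
  "order_to_coalg A le = restrict (pred_chain le) A"

end

theory Submission
  imports Defs
begin

text \<open>
  The comultiplication law says that the \<open>i\<close>-th entry of \<open>\<alpha> a\<close> is mapped by \<open>\<alpha>\<close> to the
  length-\<open>i\<close> prefix of \<open>\<alpha> a\<close>, and the counit law that \<open>\<alpha> a\<close> ends in \<open>a\<close>. Hence \<open>\<alpha>\<close> is
  injective and \<open>\<alpha> a\<close> lists, in increasing order, exactly the elements whose image is a
  prefix of \<open>\<alpha> a\<close>: pulling the prefix order back along \<open>\<alpha>\<close> gives a forest whose
  predecessor chains are the sequences \<open>\<alpha> a\<close>. Since \<open>\<alpha>\<close> is a homomorphism into
  \<open>E\<^sub>k\<close>, elements occurring in a common tuple get comparable sequences, so
  the forest covers the Gaifman graph, and \<open>|\<alpha> a| \<le> k\<close> bounds its height. Conversely,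
  sending each element to its chain of predecessors obeys the comultiplication law
  because the predecessors of the \<open>i\<close>-th predecessor of \<open>a\<close> are the first \<open>i\<close> ones.
\<close>

subsection \<open>Lists sorted by a relation\<close>

lemma sorted_wrt_unique:
  assumes "set xs = set ys" and "sorted_wrt R xs" and "sorted_wrt R ys"
    and asym: "\<And>x y. R x y \<Longrightarrow> \<not> R y x"
  shows "xs = ys"
  using assms(1-3)
proof (induction xs arbitrary: ys)
  case Nil
  then show ?case by simp
next
  case (Cons x xs)
  then obtain y ys' where ys: "ys = y # ys'"
    by (cases ys) auto
  have "x = y"
  proof (rule ccontr)
    assume "x \<noteq> y"
    then have "y \<in> set xs" "x \<in> set ys'"
      using Cons.prems(1) ys by (auto simp: set_eq_iff)
    then have "R x y" "R y x"
      using Cons.prems(2,3) ys by auto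
    then show False
      using asym by blast
  qed
  moreover have "x \<notin> set xs" "y \<notin> set ys'"
    using Cons.prems(2,3) ys asym by auto
  ultimately have "set xs = set ys'"
    using Cons.prems(1) ys by auto
  then have "xs = ys'"
    using Cons.IH Cons.prems(2,3) ys by simp
  then show ?case
    using ys \<open>x = y\<close> by simp
qed

lemma sorted_wrt_exists:
  assumes "finite S"
    and "\<And>x y. x \<in> S \<Longrightarrow> y \<in> S \<Longrightarrow> x \<noteq> y \<Longrightarrow> R x y \<or> R y x"
    and "\<And>x y z. x \<in> S \<Longrightarrow> y \<in> S \<Longrightarrow> z \<in> S \<Longrightarrow> R x y \<Longrightarrow> R y z \<Longrightarrow> R x z"
  shows "\<exists>xs. set xs = S \<and> sorted_wrt R xs"
  using assms
proof (induction S rule: finite_induct)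
  case empty
  show ?case by simp
next
  case (insert x S)
  have "\<exists>xs. set xs = S \<and> sorted_wrt R xs"
    by (rule insert.IH) (use insert.prems in blast)+
  then obtain xs where xs: "set xs = S" "sorted_wrt R xs"
    by blast
  let ?ys = "filter (\<lambda>y. R y x) xs @ [x] @ filter (\<lambda>y. \<not> R y x) xs"
  have above: "R x z" if "z \<in> set xs" "\<not> R z x" for z
    using insert.prems(1)[of z x] insert.hyps(2) that xs(1) by auto
  have "sorted_wrt R ?ys"
    using xs above insert.prems(2)[of _ x] by (auto simp: sorted_wrt_append sorted_wrt_filter)
  moreover have "set ?ys = insert x S"
    using xs(1) by auto
  ultimately show ?case by blast
qed

lemma last_sorted_wrt_maximal:
  assumes "sorted_wrt R xs" and "x \<in> set xs" and "\<forall>y\<in>set xs. \<not> R x y"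
  shows "last xs = x"
  using assms by (induction xs) (auto split: if_splits)

subsection \<open>Predecessor chains of a forest order\<close>

abbreviation strict_rel :: "'a rel \<Rightarrow> 'a \<Rightarrow> 'a \<Rightarrow> bool" where
  "strict_rel le \<equiv> \<lambda>x y. (x, y) \<in> le \<and> x \<noteq> y"

lemma strict_rel_asym: "antisym le \<Longrightarrow> strict_rel le x y \<Longrightarrow> \<not> strict_rel le y x"
  by (auto dest: antisymD)

lemma strict_rel_trans:
  "trans le \<Longrightarrow> antisym le \<Longrightarrow> strict_rel le x y \<Longrightarrow> strict_rel le y z \<Longrightarrow> strict_rel le x z"
  by (auto dest: antisymD transD)

lemma distinct_if_sorted_strict_rel: "sorted_wrt (strict_rel le) xs \<Longrightarrow> distinct xs"
  by (induction xs) auto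

lemma pred_chain_eqI:
  assumes "antisym le" and "set xs = {b. (b, a) \<in> le}" and "sorted_wrt (strict_rel le) xs"
  shows "pred_chain le a = xs"
  unfolding pred_chain_def
proof (rule the_equality)
  show "set xs = {b. (b, a) \<in> le} \<and> sorted_wrt (strict_rel le) xs"
    using assms(2,3) by simp
  fix ys
  assume "set ys = {b. (b, a) \<in> le} \<and> sorted_wrt (strict_rel le) ys"
  then show "ys = xs"
    using sorted_wrt_unique[of ys xs "strict_rel le"] strict_rel_asym[OF assms(1)] assms(2,3)
    by blast
qed

lemma pred_chain_spec:
  assumes "forest_order A le" and "a \<in> A"
  shows "set (pred_chain le a) = {b. (b, a) \<in> le}"
    and "sorted_wrt (strict_rel le) (pred_chain le a)"
proof -
  have fin: "finite {b. (b, a) \<in> le}" and chain: "is_chain le {b. (b, a) \<in> le}"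
    and "trans le" and "antisym le"
    using assms unfolding forest_order_def by auto
  have "\<exists>xs. set xs = {b. (b, a) \<in> le} \<and> sorted_wrt (strict_rel le) xs"
  proof (rule sorted_wrt_exists[OF fin])
    fix x y
    assume "x \<in> {b. (b, a) \<in> le}" "y \<in> {b. (b, a) \<in> le}" "x \<noteq> y"
    then show "strict_rel le x y \<or> strict_rel le y x"
      using chain unfolding is_chain_def by blast
  next
    fix x y z
    assume "strict_rel le x y" "strict_rel le y z"
    then show "strict_rel le x z"
      using strict_rel_trans[OF \<open>trans le\<close> \<open>antisym le\<close>] by blast
  qed
  then obtain xs where xs: "set xs = {b. (b, a) \<in> le}" "sorted_wrt (strict_rel le) xs"
    by blast
  then have "pred_chain le a = xs"
    using \<open>antisym le\<close> by (rule pred_chain_eqI[rotated])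
  then show "set (pred_chain le a) = {b. (b, a) \<in> le}" "sorted_wrt (strict_rel le) (pred_chain le a)"
    using xs by simp_all
qed

lemma self_in_pred_chain:
  assumes "forest_order A le" and "a \<in> A"
  shows "a \<in> set (pred_chain le a)"
  using assms pred_chain_spec(1)[OF assms] unfolding forest_order_def refl_on_def by auto

lemma last_pred_chain:
  assumes "forest_order A le" and "a \<in> A"
  shows "last (pred_chain le a) = a"
proof (rule last_sorted_wrt_maximal[OF pred_chain_spec(2)[OF assms] self_in_pred_chain[OF assms]])
  show "\<forall>y\<in>set (pred_chain le a). \<not> strict_rel le a y"
    using assms pred_chain_spec(1)[OF assms] unfolding forest_order_def by (auto dest: antisymD)
qed

lemma pred_chain_in_Ek_univ:
  assumes "forest_order A le" and "height_le A le k" and "a \<in> A"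
  shows "pred_chain le a \<in> Ek_univ k A"
proof -
  have preds: "set (pred_chain le a) = {b. (b, a) \<in> le}"
    using pred_chain_spec(1)[OF assms(1,3)] .
  have "set (pred_chain le a) \<subseteq> A"
    using assms(1) unfolding preds forest_order_def by auto
  moreover have "card (set (pred_chain le a)) \<le> k"
    using assms calculation unfolding preds forest_order_def height_le_def by auto
  then have "length (pred_chain le a) \<le> k"
    using distinct_if_sorted_strict_rel[OF pred_chain_spec(2)[OF assms(1,3)]]
    by (simp add: distinct_card)
  ultimately show ?thesis
    using self_in_pred_chain[OF assms(1,3)] unfolding Ek_univ_def by auto
qed

lemma pred_chain_nth:
  assumes fo: "forest_order A le" and a: "a \<in> A" and i: "i < length (pred_chain le a)"
  shows "pred_chain le (pred_chain le a ! i) = take (Suc i) (pred_chain le a)"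
proof -
  let ?P = "pred_chain le a" and ?b = "pred_chain le a ! i"
  note preds = pred_chain_spec(1)[OF fo a] and sorted = pred_chain_spec(2)[OF fo a]
  have "le \<subseteq> A \<times> A" "refl_on A le" "antisym le" "trans le"
    using fo unfolding forest_order_def by auto
  have "(?b, a) \<in> le"
    using preds i nth_mem by blast
  have "set (take (Suc i) ?P) = {c. (c, ?b) \<in> le}"
  proof (intro equalityI subsetI)
    fix c
    assume "c \<in> set (take (Suc i) ?P)"
    then obtain j where "j \<le> i" "c = ?P ! j"
      by (force simp: in_set_conv_nth less_Suc_eq_le)
    moreover have "?b \<in> A"
      using \<open>(?b, a) \<in> le\<close> \<open>le \<subseteq> A \<times> A\<close> by auto
    ultimately show "c \<in> {c. (c, ?b) \<in> le}"
      using sorted_wrt_nth_less[OF sorted _ i, of j] \<open>refl_on A le\<close>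
      by (cases "j = i") (auto simp: refl_on_def)
  next
    fix c
    assume "c \<in> {c. (c, ?b) \<in> le}"
    then have "(c, ?b) \<in> le" by simp
    then have "c \<in> set ?P"
      using \<open>(?b, a) \<in> le\<close> \<open>trans le\<close> preds by (auto dest: transD)
    then obtain j where j: "j < length ?P" "c = ?P ! j"
      by (auto simp: in_set_conv_nth)
    have "\<not> i < j"
      using sorted_wrt_nth_less[OF sorted _ j(1), of i] \<open>(c, ?b) \<in> le\<close> \<open>antisym le\<close> j(2)
      by (auto dest: antisymD)
    then show "c \<in> set (take (Suc i) ?P)"
      using j by (auto simp: in_set_conv_nth intro!: exI[of _ j])
  qed
  then show ?thesis
    using \<open>antisym le\<close> sorted_wrt_take[OF sorted] by (intro pred_chain_eqI)
qed

lemma prefix_pred_chain_iff: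
  assumes "forest_order A le" and "x \<in> A" and "y \<in> A"
  shows "prefix (pred_chain le x) (pred_chain le y) \<longleftrightarrow> (x, y) \<in> le"
proof
  assume "prefix (pred_chain le x) (pred_chain le y)"
  then show "(x, y) \<in> le"
    using set_mono_prefix self_in_pred_chain[OF assms(1,2)] pred_chain_spec(1)[OF assms(1,3)]
    by blast
next
  assume "(x, y) \<in> le"
  then obtain i where "i < length (pred_chain le y)" "x = pred_chain le y ! i"
    using pred_chain_spec(1)[OF assms(1,3)] by (metis in_set_conv_nth mem_Collect_eq)
  then show "prefix (pred_chain le x) (pred_chain le y)"
    using pred_chain_nth[OF assms(1,3)] by (simp add: take_is_prefix)
qed

subsection \<open>From coalgebras to forest covers\<close>

lemma length_Ek_delta [simp]: "length (Ek_delta s) = length s"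
  unfolding Ek_delta_def by (simp del: upt_Suc)

lemma nth_Ek_delta: "i < length s \<Longrightarrow> Ek_delta s ! i = take (Suc i) s"
  unfolding Ek_delta_def by (simp del: upt_Suc)

lemma Ek_coalgebra_univ:
  "Ek_coalgebra k A I \<alpha> \<Longrightarrow> a \<in> A \<Longrightarrow> \<alpha> a \<noteq> [] \<and> length (\<alpha> a) \<le> k \<and> set (\<alpha> a) \<subseteq> A"
  unfolding Ek_coalgebra_def is_hom_def Ek_univ_def by auto

lemma Ek_coalgebra_last: "Ek_coalgebra k A I \<alpha> \<Longrightarrow> a \<in> A \<Longrightarrow> last (\<alpha> a) = a"
  unfolding Ek_coalgebra_def by blast

lemma Ek_coalgebra_nth:
  assumes "Ek_coalgebra k A I \<alpha>" and "a \<in> A" and "i < length (\<alpha> a)"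
  shows "\<alpha> (\<alpha> a ! i) = take (Suc i) (\<alpha> a)"
proof -
  have "Ek_delta (\<alpha> a) = map \<alpha> (\<alpha> a)"
    using assms(1,2) unfolding Ek_coalgebra_def by blast
  then show ?thesis
    using nth_Ek_delta[OF assms(3)] assms(3) by simp
qed

lemma Ek_coalgebra_prefix_if_mem:
  assumes "Ek_coalgebra k A I \<alpha>" and "a \<in> A" and "b \<in> set (\<alpha> a)"
  shows "b \<in> A \<and> prefix (\<alpha> b) (\<alpha> a)"
proof -
  obtain i where "i < length (\<alpha> a)" "b = \<alpha> a ! i"
    using assms(3) by (auto simp: in_set_conv_nth)
  then show ?thesis
    using Ek_coalgebra_nth[OF assms(1,2)] Ek_coalgebra_univ[OF assms(1,2)] assms(3)
    by (auto simp: take_is_prefix)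
qed

lemma Ek_coalgebra_mem_if_prefix:
  assumes "Ek_coalgebra k A I \<alpha>" and "b \<in> A" and "prefix (\<alpha> b) (\<alpha> a)"
  shows "b \<in> set (\<alpha> a)"
  using set_mono_prefix[OF assms(3)] last_in_set[of "\<alpha> b"]
    Ek_coalgebra_univ[OF assms(1,2)] Ek_coalgebra_last[OF assms(1,2)] by auto

lemma coalg_to_order_preds:
  assumes "Ek_coalgebra k A I \<alpha>" and "a \<in> A"
  shows "{b. (b, a) \<in> coalg_to_order A \<alpha>} = set (\<alpha> a)"
  using Ek_coalgebra_mem_if_prefix[OF assms(1)] Ek_coalgebra_prefix_if_mem[OF assms] assms(2)
  unfolding coalg_to_order_def by auto

lemma sorted_Ek_coalgebra:
  assumes "Ek_coalgebra k A I \<alpha>" and "a \<in> A"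
  shows "sorted_wrt (strict_rel (coalg_to_order A \<alpha>)) (\<alpha> a)"
  unfolding sorted_wrt_iff_nth_less
proof (intro allI impI)
  fix i j
  assume ij: "i < j" "j < length (\<alpha> a)"
  have "prefix (take (Suc i) (\<alpha> a)) (take (Suc j) (\<alpha> a))"
    using take_is_prefix[of "Suc i" "take (Suc j) (\<alpha> a)"] ij by (simp add: min_def)
  then have "prefix (\<alpha> (\<alpha> a ! i)) (\<alpha> (\<alpha> a ! j))"
    using Ek_coalgebra_nth[OF assms] ij by simp
  moreover have "length (\<alpha> (\<alpha> a ! i)) \<noteq> length (\<alpha> (\<alpha> a ! j))"
    using Ek_coalgebra_nth[OF assms] ij by simp
  moreover have "\<alpha> a ! i \<in> A" "\<alpha> a ! j \<in> A"
    using Ek_coalgebra_univ[OF assms] ij by (auto dest: nth_mem)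
  ultimately show "strict_rel (coalg_to_order A \<alpha>) (\<alpha> a ! i) (\<alpha> a ! j)"
    unfolding coalg_to_order_def by auto
qed

lemma antisym_coalg_to_order:
  assumes co: "Ek_coalgebra k A I \<alpha>"
  shows "antisym (coalg_to_order A \<alpha>)"
proof (rule antisymI)
  fix x y
  assume "(x, y) \<in> coalg_to_order A \<alpha>" "(y, x) \<in> coalg_to_order A \<alpha>"
  then have "x \<in> A" "y \<in> A" "\<alpha> x = \<alpha> y"
    unfolding coalg_to_order_def by (auto intro: prefix_order.antisym)
  then show "x = y"
    using Ek_coalgebra_last[OF co] by metis
qed

lemma forest_order_coalg_to_order:
  assumes co: "Ek_coalgebra k A I \<alpha>"
  shows "forest_order A (coalg_to_order A \<alpha>)"
proof -
  let ?le = "coalg_to_order A \<alpha>"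
  have "antisym ?le"
    using co by (rule antisym_coalg_to_order)
  moreover have "trans ?le"
    unfolding trans_def coalg_to_order_def by (auto intro: prefix_order.trans)
  moreover have "is_chain ?le {b. (b, a) \<in> ?le}" if "a \<in> A" for a
    unfolding coalg_to_order_preds[OF co that] is_chain_def coalg_to_order_def
    using Ek_coalgebra_prefix_if_mem[OF co that] prefix_same_cases by blast
  ultimately show ?thesis
    unfolding forest_order_def using coalg_to_order_preds[OF co]
    by (auto simp: refl_on_def coalg_to_order_def)
qed

lemma coalg_to_order_covers_gaifman:
  assumes "Ek_coalgebra k A I \<alpha>" and "v \<in> A" "v' \<in> A" and "gaifman_adj I v v'"
  shows "(v, v') \<in> coalg_to_order A \<alpha> \<or> (v', v) \<in> coalg_to_order A \<alpha>"
proof -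
  obtain R t where t: "t \<in> I R" "v \<in> set t" "v' \<in> set t"
    using assms(4) unfolding gaifman_adj_def by blast
  then have "map \<alpha> t \<in> Ek_rel k A I R"
    using assms(1) unfolding Ek_coalgebra_def is_hom_def by blast
  then have "prefix (\<alpha> v) (\<alpha> v') \<or> prefix (\<alpha> v') (\<alpha> v)"
    unfolding Ek_rel_def using t by auto
  then show ?thesis
    using assms(2,3) unfolding coalg_to_order_def by auto
qed

text \<open>No finiteness of \<open>A\<close> is needed: \<open>b \<mapsto> |\<alpha> b|\<close> is injective on any chain.\<close>

lemma height_le_coalg_to_order:
  assumes co: "Ek_coalgebra k A I \<alpha>"
  shows "height_le A (coalg_to_order A \<alpha>) k"
  unfolding height_le_def
proof (intro allI impI)
  fix C
  assume C: "C \<subseteq> A" "is_chain (coalg_to_order A \<alpha>) C"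
  have "inj_on (\<lambda>b. length (\<alpha> b)) C"
  proof (rule inj_onI)
    fix b c
    assume "b \<in> C" "c \<in> C" and len: "length (\<alpha> b) = length (\<alpha> c)"
    then have "prefix (\<alpha> b) (\<alpha> c) \<or> prefix (\<alpha> c) (\<alpha> b)"
      using C(2) unfolding is_chain_def coalg_to_order_def by blast
    then have "\<alpha> b = \<alpha> c"
      using len prefix_length_less[OF strict_prefixI] by fastforce
    then show "b = c"
      using Ek_coalgebra_last[OF co] C(1) \<open>b \<in> C\<close> \<open>c \<in> C\<close> by (metis subsetD)
  qed
  moreover have "(\<lambda>b. length (\<alpha> b)) ` C \<subseteq> {1..k}"
    using Ek_coalgebra_univ[OF co] C(1) by (auto simp: Suc_le_eq)
  ultimately show "finite C \<and> card C \<le> k"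
    using card_inj_on_le[of _ C "{1..k}"] inj_on_finite[of _ C "{1..k}"] by auto
qed

lemma coalg_to_order_forest_cover:
  assumes "Ek_coalgebra k A I \<alpha>"
  shows "forest_cover A (gaifman_adj I) (coalg_to_order A \<alpha>) \<and> height_le A (coalg_to_order A \<alpha>) k"
  using forest_order_coalg_to_order[OF assms] coalg_to_order_covers_gaifman[OF assms]
    height_le_coalg_to_order[OF assms] unfolding forest_cover_def by blast

lemma order_to_coalg_coalg_to_order:
  assumes "\<alpha> \<in> extensional A" and co: "Ek_coalgebra k A I \<alpha>"
  shows "order_to_coalg A (coalg_to_order A \<alpha>) = \<alpha>"
proof
  fix a
  show "order_to_coalg A (coalg_to_order A \<alpha>) a = \<alpha> a"
  proof (cases "a \<in> A")
    case True
    have "pred_chain (coalg_to_order A \<alpha>) a = \<alpha> a"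
      using coalg_to_order_preds[OF co True, symmetric] sorted_Ek_coalgebra[OF co True]
      by (rule pred_chain_eqI[OF antisym_coalg_to_order[OF co]])
    then show ?thesis
      using True unfolding order_to_coalg_def by simp
  next
    case False
    then show ?thesis
      using extensional_arb[OF assms(1) False] unfolding order_to_coalg_def by simp
  qed
qed

subsection \<open>From forest covers to coalgebras\<close>

lemma order_to_coalg_extensional: "order_to_coalg A le \<in> extensional A"
  unfolding order_to_coalg_def by simp

lemma order_to_coalg_Ek_coalgebra:
  assumes sig: "sig_struct ar A I" and fc: "forest_cover A (gaifman_adj I) le"
    and ht: "height_le A le k"
  shows "Ek_coalgebra k A I (order_to_coalg A le)"
proof -
  let ?\<beta> = "order_to_coalg A le"
  have fo: "forest_order A le"
    using fc unfolding forest_cover_def by simp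
  have \<beta>: "?\<beta> a = pred_chain le a" if "a \<in> A" for a
    using that unfolding order_to_coalg_def by simp
  have univ: "?\<beta> a \<in> Ek_univ k A" if "a \<in> A" for a
    using pred_chain_in_Ek_univ[OF fo ht that] \<beta>[OF that] by simp
  have rel: "map ?\<beta> t \<in> Ek_rel k A I R" if t: "t \<in> I R" for R t
  proof -
    have tA: "set t \<subseteq> A"
      using sig t unfolding sig_struct_def by blast
    have "prefix (?\<beta> x) (?\<beta> y) \<or> prefix (?\<beta> y) (?\<beta> x)" if "x \<in> set t" "y \<in> set t" for x y
    proof (cases "x = y")
      case False
      then have "gaifman_adj I x y"
        unfolding gaifman_adj_def using that t by blast
      then have "(x, y) \<in> le \<or> (y, x) \<in> le"
        using fc that tA unfolding forest_cover_def by blast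
      then show ?thesis
        using prefix_pred_chain_iff[OF fo] \<beta> that tA by (metis subsetD)
    qed simp
    moreover have "map last (map ?\<beta> t) = t"
      using tA last_pred_chain[OF fo] \<beta> by (induction t) auto
    ultimately show ?thesis
      unfolding Ek_rel_def using univ tA t by auto
  qed
  have delta: "Ek_delta (?\<beta> a) = map ?\<beta> (?\<beta> a)" if a: "a \<in> A" for a
  proof (rule nth_equalityI)
    fix i
    assume "i < length (Ek_delta (?\<beta> a))"
    then have i: "i < length (pred_chain le a)"
      using \<beta>[OF a] by simp
    then have "pred_chain le a ! i \<in> A"
      using univ[OF a] \<beta>[OF a] unfolding Ek_univ_def by (auto dest: nth_mem)
    then show "Ek_delta (?\<beta> a) ! i = map ?\<beta> (?\<beta> a) ! i"
      using nth_Ek_delta[OF i] pred_chain_nth[OF fo a i] i \<beta> a by simp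
  qed simp
  show ?thesis
    unfolding Ek_coalgebra_def is_hom_def
    using univ rel delta last_pred_chain[OF fo] \<beta> by simp
qed

lemma coalg_to_order_order_to_coalg:
  assumes "forest_order A le"
  shows "coalg_to_order A (order_to_coalg A le) = le"
proof -
  have "le \<subseteq> A \<times> A"
    using assms unfolding forest_order_def by simp
  then show ?thesis
    unfolding coalg_to_order_def order_to_coalg_def
    using prefix_pred_chain_iff[OF assms] by auto
qed

theorem mainTheorem11:
  fixes ar :: "'r \<Rightarrow> nat" and A :: "'a set" and I :: "'r \<Rightarrow> 'a list set" and k :: nat
  assumes "sig_struct ar A I" and "finite A" and "0 < k"
  shows "bij_betw (coalg_to_order A)
            {\<alpha> \<in> extensional A. Ek_coalgebra k A I \<alpha>}
            {le. forest_cover A (gaifman_adj I) le \<and> height_le A le k}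
       \<and> (\<forall>le. forest_cover A (gaifman_adj I) le \<and> height_le A le k \<longrightarrow>
              order_to_coalg A le \<in> {\<alpha> \<in> extensional A. Ek_coalgebra k A I \<alpha>}
              \<and> coalg_to_order A (order_to_coalg A le) = le)"
proof -
  let ?C = "{\<alpha> \<in> extensional A. Ek_coalgebra k A I \<alpha>}"
  let ?F = "{le. forest_cover A (gaifman_adj I) le \<and> height_le A le k}"
  have to_coalg: "\<forall>le\<in>?F. order_to_coalg A le \<in> ?C \<and> coalg_to_order A (order_to_coalg A le) = le"
    using order_to_coalg_extensional order_to_coalg_Ek_coalgebra[OF assms(1)]
      coalg_to_order_order_to_coalg unfolding forest_cover_def by blast
  have "bij_betw (coalg_to_order A) ?C ?F"
  proof (rule bij_betw_byWitness[where f' = "order_to_coalg A"])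
    show "\<forall>\<alpha>\<in>?C. order_to_coalg A (coalg_to_order A \<alpha>) = \<alpha>"
      using order_to_coalg_coalg_to_order by blast
    show "coalg_to_order A ` ?C \<subseteq> ?F"
      using coalg_to_order_forest_cover by blast
  qed (use to_coalg in blast)+
  with to_coalg show ?thesis
    by blast
qed

end
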